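(* The name-generation monad $T$ on $[\mathsf{Inj},\mathsf{Set}]$ is observational.
   Context: $\mathsf{Inj}$ is the category of finite sets and injections; $[\mathsf{Inj},\mathsf{Set}]$ is the functor category (cartesian, products computed pointwise). The name-generation monad is given by $(TX)(a)=\operatorname{colim}_{b\in\mathsf{Inj}}X(a+b)$ (the colimit of the functor $b\mapsto X(a+b)$, acting on injections $b\to b'$ via $1_a+(-)$), with unit induced by $b=\emptyset$ and multiplication induced by $(a+b)+c\cong a+(b+c)$; it is a commutative (and affine) monad. For a commutative monad $T$ on a cartesian monoidal category: $\mathsf{Kl}(T)$ has morphisms $f:A\rightsquigarrow B$ corresponding to $f^\sharp:A\to TB$, composition $(g\circledcirc f)^\sharp=\mu\circ T(g^\sharp)\circ f^\sharp$, tensor $\otimes$ equal to $\times$ on objects with $(f\otimes g)^\sharp=\nabla\circ(f^\sharp\times g^\sharp)$; $\mathsf{force}_A^\sharp=1_{TA}$; $\mathsf{copy}_n^\sharp=\eta\circ\Delta_n:TX\to T((TX)^n)$; $\mathsf{samp}_n=\mathsf{force}^{\otimes n}\circledcirc\mathsf{copy}_n:TX\rightsquigarrow X^{\otimes n}$. $T$ is observational if for every $X$ the family $(\mathsf{samp}_n)_{n\in\mathbb{N}}$ is jointly monic in $\mathsf{Kl}(T)$. *)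

theory Defs
  imports Main
begin

text \<open>Objects of Inj are represented by the skeleton: n stands for the finite set {0..<n}.
A morphism m -> n is an injection {..<m} -> {..<n}, represented by any function
nat => nat whose restriction to {..<m} is that injection.\<close>

definition is_inj :: "nat \<Rightarrow> nat \<Rightarrow> (nat \<Rightarrow> nat) \<Rightarrow> bool" where
  "is_inj m n f \<longleftrightarrow> f ` {..<m} \<subseteq> {..<n} \<and> inj_on f {..<m}"

text \<open>Coproduct of morphisms f : a -> a' and g : b -> b' in the skeleton, giving
f + g : a + b -> a' + b' (first summand first, second summand shifted).\<close>

definition sum_inj :: "nat \<Rightarrow> nat \<Rightarrow> (nat \<Rightarrow> nat) \<Rightarrow> (nat \<Rightarrow> nat) \<Rightarrow> nat \<Rightarrow> nat" where
  "sum_inj a a' f g i = (if i < a then f i else a' + g (i - a))"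

record 'a psh =
  Ob  :: "nat \<Rightarrow> 'a set"
  Mor :: "nat \<Rightarrow> nat \<Rightarrow> (nat \<Rightarrow> nat) \<Rightarrow> 'a \<Rightarrow> 'a"

definition presheaf :: "'a psh \<Rightarrow> bool" where
  "presheaf X \<longleftrightarrow>
     (\<forall>m n f x. is_inj m n f \<and> x \<in> Ob X m \<longrightarrow> Mor X m n f x \<in> Ob X n) \<and>
     (\<forall>m n f g x. is_inj m n f \<and> (\<forall>i<m. f i = g i) \<and> x \<in> Ob X m
                    \<longrightarrow> Mor X m n f x = Mor X m n g x) \<and>
     (\<forall>m x. x \<in> Ob X m \<longrightarrow> Mor X m m id x = x) \<and>
     (\<forall>l m n f g x. is_inj l m f \<and> is_inj m n g \<and> x \<in> Ob X l
                    \<longrightarrow> Mor X l n (g \<circ> f) x = Mor X m n g (Mor X l m f x))"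

definition nat_trans :: "'a psh \<Rightarrow> 'b psh \<Rightarrow> (nat \<Rightarrow> 'a \<Rightarrow> 'b) \<Rightarrow> bool" where
  "nat_trans X Y \<alpha> \<longleftrightarrow>
     (\<forall>n x. x \<in> Ob X n \<longrightarrow> \<alpha> n x \<in> Ob Y n) \<and>
     (\<forall>m n f x. is_inj m n f \<and> x \<in> Ob X m \<longrightarrow> \<alpha> n (Mor X m n f x) = Mor Y m n f (\<alpha> m x))"

definition nt_eq :: "'a psh \<Rightarrow> (nat \<Rightarrow> 'a \<Rightarrow> 'b) \<Rightarrow> (nat \<Rightarrow> 'a \<Rightarrow> 'b) \<Rightarrow> bool" where
  "nt_eq X \<alpha> \<beta> \<longleftrightarrow> (\<forall>n x. x \<in> Ob X n \<longrightarrow> \<alpha> n x = \<beta> n x)"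

definition prodps :: "'a psh \<Rightarrow> 'b psh \<Rightarrow> ('a \<times> 'b) psh" where
  "prodps X Y = \<lparr>Ob = (\<lambda>n. Ob X n \<times> Ob Y n),
                 Mor = (\<lambda>m n f p. (Mor X m n f (fst p), Mor Y m n f (snd p)))\<rparr>"

definition powps :: "'a psh \<Rightarrow> nat \<Rightarrow> 'a list psh" where
  "powps X k = \<lparr>Ob = (\<lambda>n. {xs. length xs = k \<and> set xs \<subseteq> Ob X n}),
                Mor = (\<lambda>m n f xs. map (Mor X m n f) xs)\<rparr>"

text \<open>(TX)(a) = colim_{b in Inj} X(a+b): the quotient of the set of pairs (b, x) with
x in X(a+b) by the equivalence relation generated by (b, x) ~ (b', X(1_a + g) x)
for injections g : b -> b'.\<close>

definition colim_step :: "'a psh \<Rightarrow> nat \<Rightarrow> nat \<times> 'a \<Rightarrow> nat \<times> 'a \<Rightarrow> bool" where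
  "colim_step X a p q \<longleftrightarrow>
     (\<exists>b b' g x. p = (b, x) \<and> x \<in> Ob X (a + b) \<and> is_inj b b' g \<and>
                 q = (b', Mor X (a + b) (a + b') (sum_inj a a id g) x))"

definition colim_eq :: "'a psh \<Rightarrow> nat \<Rightarrow> nat \<times> 'a \<Rightarrow> nat \<times> 'a \<Rightarrow> bool" where
  "colim_eq X a = (sup (colim_step X a) (colim_step X a)\<inverse>\<inverse>)\<^sup>*\<^sup>*"

definition cls :: "'a psh \<Rightarrow> nat \<Rightarrow> nat \<times> 'a \<Rightarrow> (nat \<times> 'a) set" where
  "cls X a p = {q. colim_eq X a p q}"

definition rep :: "(nat \<times> 'a) set \<Rightarrow> nat \<times> 'a" where
  "rep C = (SOME p. p \<in> C)"

definition TOb :: "'a psh \<Rightarrow> nat \<Rightarrow> (nat \<times> 'a) set set" where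
  "TOb X a = {cls X a (b, x) | b x. x \<in> Ob X (a + b)}"

definition TMor :: "'a psh \<Rightarrow> nat \<Rightarrow> nat \<Rightarrow> (nat \<Rightarrow> nat) \<Rightarrow> (nat \<times> 'a) set \<Rightarrow> (nat \<times> 'a) set" where
  "TMor X a a' f C = (case rep C of (b, x) \<Rightarrow> cls X a' (b, Mor X (a + b) (a' + b) (sum_inj a a' f id) x))"

definition Tps :: "'a psh \<Rightarrow> (nat \<times> 'a) set psh" where
  "Tps X = \<lparr>Ob = TOb X, Mor = TMor X\<rparr>"

definition Tnt :: "'b psh \<Rightarrow> (nat \<Rightarrow> 'a \<Rightarrow> 'b) \<Rightarrow> nat \<Rightarrow> (nat \<times> 'a) set \<Rightarrow> (nat \<times> 'b) set" where
  "Tnt Y \<alpha> a C = (case rep C of (b, x) \<Rightarrow> cls Y a (b, \<alpha> (a + b) x))"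

definition etaT :: "'a psh \<Rightarrow> nat \<Rightarrow> 'a \<Rightarrow> (nat \<times> 'a) set" where
  "etaT X a x = cls X a (0, x)"

text \<open>Multiplication: induced by (a+b)+b' = a+(b+b').\<close>
definition muT :: "'a psh \<Rightarrow> nat \<Rightarrow> (nat \<times> (nat \<times> 'a) set) set \<Rightarrow> (nat \<times> 'a) set" where
  "muT X a C = (case rep C of (b, D) \<Rightarrow> (case rep D of (b', x) \<Rightarrow> cls X a (b + b', x)))"

text \<open>Canonical strength A x TB -> T(A x B) and costrength TA x B -> T(A x B);
the inclusion a -> a + b is the identity on {..<a}.\<close>
definition strength :: "'a psh \<Rightarrow> 'b psh \<Rightarrow> nat \<Rightarrow> 'a \<times> (nat \<times> 'b) set \<Rightarrow> (nat \<times> ('a \<times> 'b)) set" where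
  "strength A B a p = (case p of (x, C) \<Rightarrow> (case rep C of (b, y) \<Rightarrow>
      cls (prodps A B) a (b, (Mor A a (a + b) id x, y))))"

definition costrength :: "'a psh \<Rightarrow> 'b psh \<Rightarrow> nat \<Rightarrow> (nat \<times> 'a) set \<times> 'b \<Rightarrow> (nat \<times> ('a \<times> 'b)) set" where
  "costrength A B a p = (case p of (C, y) \<Rightarrow> (case rep C of (b, x) \<Rightarrow>
      cls (prodps A B) a (b, (x, Mor B a (a + b) id y))))"

definition nabla :: "'a psh \<Rightarrow> 'b psh \<Rightarrow> nat \<Rightarrow> (nat \<times> 'a) set \<times> (nat \<times> 'b) set \<Rightarrow> (nat \<times> ('a \<times> 'b)) set" where
  "nabla A B a p = muT (prodps A B) a
      (Tnt (Tps (prodps A B)) (costrength A B) a (strength (Tps A) B a p))"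

definition kcomp :: "'c psh \<Rightarrow> (nat \<Rightarrow> 'b \<Rightarrow> (nat \<times> 'c) set) \<Rightarrow> (nat \<Rightarrow> 'a \<Rightarrow> (nat \<times> 'b) set)
                       \<Rightarrow> nat \<Rightarrow> 'a \<Rightarrow> (nat \<times> 'c) set" where
  "kcomp Z g f a x = muT Z a (Tnt (Tps Z) g a (f a x))"

text \<open>(force^{\<otimes>n})^# : (TX)^n -> T(X^n), where force^{\<otimes>(k+1)} = force \<otimes> force^{\<otimes>k},
force^{\<otimes>0} = identity on the unit, and X \<times> X^k is identified with X^(k+1) via Cons.
Since force^# = 1, (f \<otimes> g)^# = nabla o (f^# \<times> g^#) gives the recursion below.\<close>
fun force_tensor :: "'a psh \<Rightarrow> nat \<Rightarrow> (nat \<times> 'a) set list \<Rightarrow> (nat \<times> 'a list) set" where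
  "force_tensor X a [] = etaT (powps X 0) a []"
| "force_tensor X a (C # Cs) =
     Tnt (powps X (Suc (length Cs))) (\<lambda>_ p. fst p # snd p) a
       (nabla X (powps X (length Cs)) a (C, force_tensor X a Cs))"

definition copy_sharp :: "'a psh \<Rightarrow> nat \<Rightarrow> nat \<Rightarrow> (nat \<times> 'a) set \<Rightarrow> (nat \<times> (nat \<times> 'a) set list) set" where
  "copy_sharp X n a C = etaT (powps (Tps X) n) a (replicate n C)"

definition samp_sharp :: "'a psh \<Rightarrow> nat \<Rightarrow> nat \<Rightarrow> (nat \<times> 'a) set \<Rightarrow> (nat \<times> 'a list) set" where
  "samp_sharp X n = kcomp (powps X n) (force_tensor X) (copy_sharp X n)"

text \<open>The family (samp_n)_n is jointly monic in Kl(T) with respect to test objects A: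
for Kleisli morphisms f, g : A ~> TX (i.e. natural transformations A -> T(TX)),
samp_n o f = samp_n o g for all n implies f = g.\<close>
definition samp_jointly_monic_wrt :: "'a psh \<Rightarrow> 'b psh \<Rightarrow> bool" where
  "samp_jointly_monic_wrt X A \<longleftrightarrow>
     (\<forall>f g. nat_trans A (Tps (Tps X)) f \<and> nat_trans A (Tps (Tps X)) g \<and>
        (\<forall>n. nt_eq A (kcomp (powps X n) (samp_sharp X n) f) (kcomp (powps X n) (samp_sharp X n) g))
        \<longrightarrow> nt_eq A f g)"

end

theory Submission
  imports Defs
begin

text \<open>
An element of T(TX)(a) is a class [b, [c, x]] with x \<in> X(a+b+c): b names are generated by the
outer layer of T and c by the inner one. Kleisli-composing with samp_n yields the class
[b + n c, (x_{n-1}, ..., x_0)], where the n copies of x share the outer names but each uses its own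
block of c fresh inner names. Take two elements [b, [c, x]] and [b', [c', x']] on which all samp_n
agree, and let n = b + b' + 1. Equality of the two classes means the two tuples coincide after
embedding their names into a common finite set d. Each outer name of one side meets at most one
block of the other side, so by pigeonhole some block r meets no outer name of the other side.
Comparing the r-th components produces one z \<in> X(a+d) which determines both elements: each equals
[d, [d, \<rho> z]], where \<rho> keeps the outer names of both sides at the outer level and moves every
other name of d to the inner level.
\<close>

section \<open>Injections between finite ordinals\<close>

lemma is_injI:
  "(\<And>i. i < m \<Longrightarrow> f i < n) \<Longrightarrow> (\<And>i j. i < m \<Longrightarrow> j < m \<Longrightarrow> f i = f j \<Longrightarrow> i = j)
    \<Longrightarrow> is_inj m n f"
  by (auto simp: is_inj_def inj_on_def)

lemma is_inj_less: "is_inj m n f \<Longrightarrow> i < m \<Longrightarrow> f i < n"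
  by (auto simp: is_inj_def)

lemma is_inj_eqD: "is_inj m n f \<Longrightarrow> i < m \<Longrightarrow> j < m \<Longrightarrow> f i = f j \<Longrightarrow> i = j"
  by (auto simp: is_inj_def inj_on_def)

lemma is_inj_id: "m \<le> n \<Longrightarrow> is_inj m n id"
  by (rule is_injI) auto

lemma is_inj_id_add [simp]: "is_inj m (m + k) id"
  and is_inj_id_refl [simp]: "is_inj m m id"
  by (auto intro: is_inj_id)

lemma is_inj_add_left: "s + c \<le> n \<Longrightarrow> is_inj c n ((+) s)"
  by (rule is_injI) auto

lemma is_inj_comp: "is_inj l m f \<Longrightarrow> is_inj m n g \<Longrightarrow> is_inj l n (g \<circ> f)"
  by (rule is_injI) (auto dest: is_inj_less is_inj_eqD)

lemma is_inj_cong: "is_inj m n f \<Longrightarrow> (\<And>i. i < m \<Longrightarrow> f i = g i) \<Longrightarrow> is_inj m n g"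
  by (rule is_injI) (metis is_inj_less is_inj_eqD)+

lemma is_inj_mono: "is_inj m n f \<Longrightarrow> m' \<le> m \<Longrightarrow> is_inj m' n f"
  by (rule is_injI) (meson is_inj_less is_inj_eqD less_le_trans)+

lemma is_inj_notin_image_prefix:
  assumes u: "is_inj (b + c) d u" and j: "j < c"
  shows "u (b + j) \<notin> u ` {..<b}"
proof
  assume "u (b + j) \<in> u ` {..<b}"
  then obtain k where "k < b" "u (b + j) = u k" by auto
  with is_inj_eqD[OF u, of "b + j" k] j show False by simp
qed

lemma is_inj_sum_inj:
  assumes f: "is_inj a a' f" and g: "is_inj b b' g"
  shows "is_inj (a + b) (a' + b') (sum_inj a a' f g)"
proof (rule is_injI)
  fix i assume "i < a + b"
  then show "sum_inj a a' f g i < a' + b'"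
    using is_inj_less[OF f, of i] is_inj_less[OF g, of "i - a"] by (auto simp: sum_inj_def)
next
  fix i j assume ij: "i < a + b" "j < a + b" and e: "sum_inj a a' f g i = sum_inj a a' f g j"
  consider "i < a" "j < a" | "i < a" "\<not> j < a" | "\<not> i < a" "j < a" | "\<not> i < a" "\<not> j < a"
    by blast
  then show "i = j"
  proof cases
    case 1 then show ?thesis using e is_inj_eqD[OF f] by (simp add: sum_inj_def)
  next
    case 4
    then have "i - a = j - a" using e ij is_inj_eqD[OF g, of "i - a" "j - a"] by (simp add: sum_inj_def)
    with 4 show ?thesis by simp
  qed (use e is_inj_less[OF f, of i] is_inj_less[OF f, of j] in \<open>auto simp: sum_inj_def\<close>)
qed

lemma is_inj_sum_inj_id [simp]: "is_inj b b' g \<Longrightarrow> is_inj (a + b) (a + b') (sum_inj a a id g)"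
  using is_inj_sum_inj[of a a id b b' g] by simp

lemma is_inj_sum_inj_right_id: "is_inj a a' f \<Longrightarrow> is_inj (a + b) (a' + b) (sum_inj a a' f id)"
  using is_inj_sum_inj[of a a' f b b id] by simp

lemma sum_inj_id_id [simp]: "sum_inj a a id id = id"
  by (simp add: sum_inj_def fun_eq_iff)

lemma sum_inj_assoc: "sum_inj a a id (sum_inj b b' g h) = sum_inj (a + b) (a + b') (sum_inj a a id g) h"
  by (auto simp: sum_inj_def fun_eq_iff)

lemma sum_inj_add_id: "sum_inj a (a + k) id id = sum_inj a a id ((+) k)"
  by (simp add: sum_inj_def fun_eq_iff)

lemma sum_inj_id_comp: "sum_inj a a id p (sum_inj a a id h i) = sum_inj a a id (p \<circ> h) i"
  by (simp add: sum_inj_def)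

lemma is_inj_amalgamation:
  assumes f1: "is_inj m d1 f1" and f2: "is_inj m d2 f2"
  obtains D p1 p2 where "is_inj d1 D p1" "is_inj d2 D p2" "\<And>i. i < m \<Longrightarrow> p1 (f1 i) = p2 (f2 i)"
proof -
  have i2: "inj_on f2 {..<m}" using f2 by (simp add: is_inj_def)
  define f2_inv where "f2_inv = the_inv_into {..<m} f2"
  define p2 where "p2 j = (if j \<in> f2 ` {..<m} then f1 (f2_inv j) else d1 + j)" for j
  have inv_less: "f2_inv j < m" if "j \<in> f2 ` {..<m}" for j
    using the_inv_into_into[OF i2 that] by (auto simp: f2_inv_def)
  have low: "p2 j < d1" if "j \<in> f2 ` {..<m}" for j
    using that inv_less is_inj_less[OF f1] by (simp add: p2_def)
  have "is_inj d2 (d1 + d2) p2"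
  proof (rule is_injI)
    show "p2 j < d1 + d2" if "j < d2" for j
      using that low[of j] by (cases "j \<in> f2 ` {..<m}") (auto simp: p2_def)
  next
    fix i j assume e: "p2 i = p2 j"
    show "i = j"
    proof (cases "i \<in> f2 ` {..<m}"; cases "j \<in> f2 ` {..<m}")
      assume ai: "i \<in> f2 ` {..<m}" and aj: "j \<in> f2 ` {..<m}"
      then have "f2_inv i = f2_inv j"
        using e is_inj_eqD[OF f1] inv_less by (simp add: p2_def)
      then show ?thesis
        using f_the_inv_into_f[OF i2 ai] f_the_inv_into_f[OF i2 aj] by (metis f2_inv_def)
    next
      assume "i \<in> f2 ` {..<m}" "j \<notin> f2 ` {..<m}"
      then show ?thesis using e low[of i] by (simp add: p2_def)
    next
      assume "i \<notin> f2 ` {..<m}" "j \<in> f2 ` {..<m}"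
      then show ?thesis using e low[of j] by (simp add: p2_def)
    next
      assume "i \<notin> f2 ` {..<m}" "j \<notin> f2 ` {..<m}"
      then show ?thesis using e by (simp add: p2_def)
    qed
  qed
  moreover have "id (f1 i) = p2 (f2 i)" if "i < m" for i
    using the_inv_into_f_f[OF i2] that by (simp add: p2_def f2_inv_def)
  ultimately show ?thesis using that[of "d1 + d2" id p2] by simp
qed

lemma presheaf_Mor_closed:
  "presheaf X \<Longrightarrow> is_inj m n f \<Longrightarrow> x \<in> Ob X m \<Longrightarrow> Mor X m n f x \<in> Ob X n"
  unfolding presheaf_def by blast

lemma presheaf_Mor_cong:
  "presheaf X \<Longrightarrow> is_inj m n f \<Longrightarrow> (\<And>i. i < m \<Longrightarrow> f i = g i) \<Longrightarrow> x \<in> Ob X m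
    \<Longrightarrow> Mor X m n f x = Mor X m n g x"
  unfolding presheaf_def by blast

lemma presheaf_Mor_comp:
  assumes X: "presheaf X" and f: "is_inj l m f" and g: "is_inj m n g" and x: "x \<in> Ob X l"
    and k: "\<And>i. i < l \<Longrightarrow> g (f i) = k i"
  shows "Mor X m n g (Mor X l m f x) = Mor X l n k x"
proof -
  have "Mor X m n g (Mor X l m f x) = Mor X l n (g \<circ> f) x"
    using X f g x unfolding presheaf_def by metis
  also have "\<dots> = Mor X l n k x"
    using presheaf_Mor_cong[OF X is_inj_comp[OF f g] _ x] k by simp
  finally show ?thesis .
qed

lemma Ob_Tps [simp]: "Ob (Tps X) = TOb X"
  and Mor_Tps [simp]: "Mor (Tps X) = TMor X"
  by (simp_all add: Tps_def)

lemma Ob_prodps [simp]: "Ob (prodps A B) n = Ob A n \<times> Ob B n"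
  and Mor_prodps [simp]: "Mor (prodps A B) m n f p = (Mor A m n f (fst p), Mor B m n f (snd p))"
  by (simp_all add: prodps_def)

lemma Ob_powps [simp]: "Ob (powps X k) n = {xs. length xs = k \<and> set xs \<subseteq> Ob X n}"
  and Mor_powps [simp]: "Mor (powps X k) m n f xs = map (Mor X m n f) xs"
  by (simp_all add: powps_def)

lemma presheaf_prodps: "presheaf A \<Longrightarrow> presheaf B \<Longrightarrow> presheaf (prodps A B)"
  unfolding presheaf_def by (auto simp: prodps_def)

lemma presheaf_powps:
  assumes X: "presheaf X"
  shows "presheaf (powps X k)"
  unfolding presheaf_def
proof (intro conjI allI impI)
  fix m xs assume "xs \<in> Ob (powps X k) m"
  then show "Mor (powps X k) m m id xs = xs"
    using X unfolding presheaf_def by (auto intro!: map_idI)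
qed (use X in \<open>auto simp: presheaf_def\<close>)

lemma colim_eq_refl [simp]: "colim_eq X a p p"
  by (simp add: colim_eq_def)

lemma colim_eq_sym: "colim_eq X a p q \<Longrightarrow> colim_eq X a q p"
  unfolding colim_eq_def
proof (induction rule: rtranclp_induct)
  case (step y z)
  then have "(sup (colim_step X a) (colim_step X a)\<inverse>\<inverse>) z y" by auto
  then show ?case using step.IH by (rule converse_rtranclp_into_rtranclp)
qed simp

lemma colim_eq_trans: "colim_eq X a p q \<Longrightarrow> colim_eq X a q r \<Longrightarrow> colim_eq X a p r"
  unfolding colim_eq_def by (rule rtranclp_trans)

lemma cls_eq_iff: "cls X a p = cls X a q \<longleftrightarrow> colim_eq X a p q"
  unfolding cls_def by (auto intro: colim_eq_trans colim_eq_sym)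

lemma cls_step:
  "x \<in> Ob X (a + b) \<Longrightarrow> is_inj b b' g
    \<Longrightarrow> cls X a (b, x) = cls X a (b', Mor X (a + b) (a + b') (sum_inj a a id g) x)"
  unfolding cls_eq_iff colim_eq_def by (rule r_into_rtranclp) (auto simp: colim_step_def)

lemma colim_eq_invariant:
  "colim_eq X a p q \<Longrightarrow> (\<And>p q. colim_step X a p q \<Longrightarrow> \<phi> p = \<phi> q) \<Longrightarrow> \<phi> p = \<phi> q"
  unfolding colim_eq_def by (induction rule: rtranclp_induct) auto

lemma rep_invariant:
  assumes "\<And>p q. colim_step X a p q \<Longrightarrow> \<phi> p = \<phi> q"
  shows "\<phi> (rep (cls X a p)) = \<phi> p"
proof -
  have "rep (cls X a p) \<in> cls X a p"
    unfolding rep_def by (rule someI[of _ p]) (simp add: cls_def)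
  then have "colim_eq X a (rep (cls X a p)) p"
    by (simp add: cls_def colim_eq_sym)
  then show ?thesis
    using colim_eq_invariant assms by blast
qed

lemma case_rep_cls:
  assumes "\<And>b b' g x. x \<in> Ob X (a + b) \<Longrightarrow> is_inj b b' g
    \<Longrightarrow> \<phi> b x = \<phi> b' (Mor X (a + b) (a + b') (sum_inj a a id g) x)"
  shows "(case rep (cls X a (b, x)) of (b', x') \<Rightarrow> \<phi> b' x') = \<phi> b x"
  using rep_invariant[of X a "case_prod \<phi>" "(b, x)"] assms by (auto simp: colim_step_def)

lemma TOb_cls [simp]: "x \<in> Ob X (a + b) \<Longrightarrow> cls X a (b, x) \<in> TOb X a"
  by (auto simp: TOb_def)

lemma TOb_E:
  assumes "C \<in> TOb X a"
  obtains b x where "C = cls X a (b, x)" "x \<in> Ob X (a + b)"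
  using assms by (auto simp: TOb_def)

lemma TTOb_E:
  assumes "t \<in> TOb (Tps X) a"
  obtains b c x where "t = cls (Tps X) a (b, cls X (a + b) (c, x))" "x \<in> Ob X (a + b + c)"
  using assms by (auto elim!: TOb_E)

lemma TMor_cls:
  assumes X: "presheaf X" and f: "is_inj a a' f"
  shows "TMor X a a' f (cls X a (b, x)) = cls X a' (b, Mor X (a + b) (a' + b) (sum_inj a a' f id) x)"
  unfolding TMor_def
proof (rule case_rep_cls)
  fix b b' g x assume x: "x \<in> Ob X (a + b)" and g: "is_inj b b' g"
  have f_less: "\<And>i. i < a \<Longrightarrow> f i < a'" using is_inj_less[OF f] .
  have F: "is_inj (a + b) (a' + b) (sum_inj a a' f id)" "is_inj (a + b') (a' + b') (sum_inj a a' f id)"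
    using is_inj_sum_inj_right_id[OF f] by auto
  have "cls X a' (b, Mor X (a + b) (a' + b) (sum_inj a a' f id) x)
      = cls X a' (b', Mor X (a' + b) (a' + b') (sum_inj a' a' id g) (Mor X (a + b) (a' + b) (sum_inj a a' f id) x))"
    using cls_step[OF presheaf_Mor_closed[OF X F(1) x] g] .
  also have "Mor X (a' + b) (a' + b') (sum_inj a' a' id g) (Mor X (a + b) (a' + b) (sum_inj a a' f id) x)
      = Mor X (a + b) (a' + b') (sum_inj a a' f g) x"
    by (rule presheaf_Mor_comp[OF X F(1) is_inj_sum_inj_id[OF g] x]) (auto simp: sum_inj_def f_less)
  also have "\<dots> = Mor X (a + b') (a' + b') (sum_inj a a' f id) (Mor X (a + b) (a + b') (sum_inj a a id g) x)"
    by (rule presheaf_Mor_comp[OF X is_inj_sum_inj_id[OF g] F(2) x, symmetric]) (simp add: sum_inj_def)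
  finally show "cls X a' (b, Mor X (a + b) (a' + b) (sum_inj a a' f id) x)
      = cls X a' (b', Mor X (a + b') (a' + b') (sum_inj a a' f id) (Mor X (a + b) (a + b') (sum_inj a a id g) x))" .
qed

lemma TMor_closed:
  assumes X: "presheaf X" and f: "is_inj a a' f" and C: "C \<in> TOb X a"
  shows "TMor X a a' f C \<in> TOb X a'"
proof -
  from C obtain b x where "C = cls X a (b, x)" "x \<in> Ob X (a + b)" by (rule TOb_E)
  then show ?thesis
    by (simp add: TMor_cls[OF X f] presheaf_Mor_closed[OF X is_inj_sum_inj_right_id[OF f]])
qed

lemma TMor_comp:
  assumes X: "presheaf X" and C: "C \<in> TOb X a1" and f: "is_inj a1 a2 f" and g: "is_inj a2 a3 g"
    and k: "\<And>i. i < a1 \<Longrightarrow> g (f i) = k i"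
  shows "TMor X a2 a3 g (TMor X a1 a2 f C) = TMor X a1 a3 k C"
proof -
  from C obtain b x where C: "C = cls X a1 (b, x)" and x: "x \<in> Ob X (a1 + b)" by (rule TOb_E)
  have kk: "is_inj a1 a3 k" using is_inj_cong[OF is_inj_comp[OF f g]] k by simp
  show ?thesis
    unfolding C TMor_cls[OF X f] TMor_cls[OF X g] TMor_cls[OF X kk]
    by (subst presheaf_Mor_comp[OF X is_inj_sum_inj_right_id[OF f] is_inj_sum_inj_right_id[OF g] x])
      (auto simp: sum_inj_def is_inj_less[OF f] k)
qed

lemma Tnt_cls:
  assumes \<alpha>: "nat_trans X Y \<alpha>"
  shows "Tnt Y \<alpha> a (cls X a (b, x)) = cls Y a (b, \<alpha> (a + b) x)"
  unfolding Tnt_def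
proof (rule case_rep_cls)
  fix b b' g x assume x: "x \<in> Ob X (a + b)" and g: "is_inj b b' g"
  have "\<alpha> (a + b') (Mor X (a + b) (a + b') (sum_inj a a id g) x) = Mor Y (a + b) (a + b') (sum_inj a a id g) (\<alpha> (a + b) x)"
    using \<alpha> x g by (simp add: nat_trans_def)
  moreover have "\<alpha> (a + b) x \<in> Ob Y (a + b)"
    using \<alpha> x by (simp add: nat_trans_def)
  ultimately show "cls Y a (b, \<alpha> (a + b) x) = cls Y a (b', \<alpha> (a + b') (Mor X (a + b) (a + b') (sum_inj a a id g) x))"
    using cls_step[OF _ g] by simp
qed

lemma muT_inner_cls:
  assumes X: "presheaf X"
  shows "(case rep (cls X (a + b) (c, x)) of (c', x') \<Rightarrow> cls X a (b + c', x')) = cls X a (b + c, x)"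
proof (rule case_rep_cls)
  fix c c' h x assume "x \<in> Ob X (a + b + c)" and h: "is_inj c c' h"
  then show "cls X a (b + c, x) = cls X a (b + c', Mor X (a + b + c) (a + b + c') (sum_inj (a + b) (a + b) id h) x)"
    using cls_step[OF _ is_inj_sum_inj_id[OF h, of b], of x X a] by (simp add: add.assoc sum_inj_assoc)
qed

lemma muT_cls:
  assumes X: "presheaf X"
  shows "muT X a (cls (Tps X) a (b, cls X (a + b) (c, x))) = cls X a (b + c, x)"
proof -
  have "(case rep (cls (Tps X) a (b, cls X (a + b) (c, x))) of
          (b', D) \<Rightarrow> case rep D of (c', x') \<Rightarrow> cls X a (b' + c', x'))
      = (case rep (cls X (a + b) (c, x)) of (c', x') \<Rightarrow> cls X a (b + c', x'))"
  proof (rule case_rep_cls)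
    fix b b' g D assume D: "D \<in> Ob (Tps X) (a + b)" and g: "is_inj b b' g"
    from D obtain c x where D: "D = cls X (a + b) (c, x)" and x: "x \<in> Ob X (a + b + c)"
      by (auto elim: TOb_E)
    have "cls X a (b + c, x) = cls X a (b' + c, Mor X (a + b + c) (a + b' + c) (sum_inj (a + b) (a + b') (sum_inj a a id g) id) x)"
      using cls_step[OF _ is_inj_sum_inj_right_id[OF g, of c], of x X a] x by (simp add: add.assoc sum_inj_assoc)
    then show "(case rep D of (c', x') \<Rightarrow> cls X a (b + c', x'))
        = (case rep (Mor (Tps X) (a + b) (a + b') (sum_inj a a id g) D) of (c', x') \<Rightarrow> cls X a (b' + c', x'))"
      by (simp add: D TMor_cls[OF X is_inj_sum_inj_id[OF g]] muT_inner_cls[OF X])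
  qed
  then show ?thesis unfolding muT_def by (simp add: muT_inner_cls[OF X])
qed

lemma strength_cls:
  assumes A: "presheaf A" and C: "C \<in> TOb A a"
  shows "strength (Tps A) B a (C, cls B a (m, y)) = cls (prodps (Tps A) B) a (m, (TMor A a (a + m) id C, y))"
  unfolding strength_def prod.case Mor_Tps
proof (rule case_rep_cls)
  fix m m' g y assume y: "y \<in> Ob B (a + m)" and g: "is_inj m m' g"
  have "(TMor A a (a + m) id C, y) \<in> Ob (prodps (Tps A) B) (a + m)"
    using TMor_closed[OF A _ C] y by simp
  from cls_step[OF this g] show "cls (prodps (Tps A) B) a (m, TMor A a (a + m) id C, y)
      = cls (prodps (Tps A) B) a (m', TMor A a (a + m') id C, Mor B (a + m) (a + m') (sum_inj a a id g) y)"
    by (simp add: TMor_comp[OF A C is_inj_id_add is_inj_sum_inj_id[OF g], of id] sum_inj_def)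
qed

lemma costrength_cls:
  assumes B: "presheaf B" and y: "y \<in> Ob B a"
  shows "costrength A B a (cls A a (b, x), y) = cls (prodps A B) a (b, (x, Mor B a (a + b) id y))"
  unfolding costrength_def prod.case
proof (rule case_rep_cls)
  fix b b' g x assume x: "x \<in> Ob A (a + b)" and g: "is_inj b b' g"
  have "(x, Mor B a (a + b) id y) \<in> Ob (prodps A B) (a + b)"
    using presheaf_Mor_closed[OF B is_inj_id_add y] x by simp
  from cls_step[OF this g] show "cls (prodps A B) a (b, x, Mor B a (a + b) id y)
      = cls (prodps A B) a (b', Mor A (a + b) (a + b') (sum_inj a a id g) x, Mor B a (a + b') id y)"
    by (simp add: presheaf_Mor_comp[OF B is_inj_id_add is_inj_sum_inj_id[OF g] y, of id] sum_inj_def)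
qed

lemma nat_trans_costrength:
  assumes A: "presheaf A" and B: "presheaf B"
  shows "nat_trans (prodps (Tps A) B) (Tps (prodps A B)) (costrength A B)"
  unfolding nat_trans_def
proof (intro conjI allI impI)
  fix n p assume "p \<in> Ob (prodps (Tps A) B) n"
  then obtain b x y where p: "p = (cls A n (b, x), y)" and x: "x \<in> Ob A (n + b)" and y: "y \<in> Ob B n"
    by (auto elim: TOb_E)
  show "costrength A B n p \<in> Ob (Tps (prodps A B)) n"
    using x presheaf_Mor_closed[OF B is_inj_id_add y] by (simp add: p costrength_cls[OF B y])
next
  fix m n f p assume "is_inj m n f \<and> p \<in> Ob (prodps (Tps A) B) m"
  then obtain b x y where f: "is_inj m n f" and p: "p = (cls A m (b, x), y)" and y: "y \<in> Ob B m"
    by (auto elim: TOb_E)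
  have F: "is_inj (m + b) (n + b) (sum_inj m n f id)" using is_inj_sum_inj_right_id[OF f] .
  have "Mor B (m + b) (n + b) (sum_inj m n f id) (Mor B m (m + b) id y) = Mor B m (n + b) f y"
    by (rule presheaf_Mor_comp[OF B is_inj_id_add F y]) (simp add: sum_inj_def)
  also have "\<dots> = Mor B n (n + b) id (Mor B m n f y)"
    by (rule presheaf_Mor_comp[OF B f is_inj_id_add y, symmetric]) simp
  finally show "costrength A B n (Mor (prodps (Tps A) B) m n f p) = Mor (Tps (prodps A B)) m n f (costrength A B m p)"
    by (simp add: p TMor_cls[OF A f] TMor_cls[OF presheaf_prodps[OF A B] f]
        costrength_cls[OF B y] costrength_cls[OF B presheaf_Mor_closed[OF B f y]])
qed

lemma nabla_cls:
  assumes A: "presheaf A" and B: "presheaf B" and x: "x \<in> Ob A (a + b)" and y: "y \<in> Ob B (a + m)"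
  shows "nabla A B a (cls A a (b, x), cls B a (m, y)) = cls (prodps A B) a (m + b,
     (Mor A (a + b) (a + (m + b)) (sum_inj a a id ((+) m)) x, Mor B (a + m) (a + (m + b)) id y))"
  unfolding nabla_def
  by (simp add: strength_cls[OF A TOb_cls[OF x]] TMor_cls[OF A] Tnt_cls[OF nat_trans_costrength[OF A B]]
      costrength_cls[OF B y] muT_cls[OF presheaf_prodps[OF A B]] add.assoc sum_inj_add_id)

section \<open>Sampling on representatives\<close>

text \<open>
Representatives (c_i, x_i) with x_i \<in> X(a + c_i) are juxtaposed into one tuple over
a + (c_0 + ... + c_k), with the fresh names of x_0 placed last; this is the order in which the
double strength lays out the fresh names of its two arguments.
\<close>

fun juxt_width :: "(nat \<times> 'a) list \<Rightarrow> nat" where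
  "juxt_width [] = 0"
| "juxt_width ((c, x) # ps) = juxt_width ps + c"

fun juxt :: "'a psh \<Rightarrow> nat \<Rightarrow> (nat \<times> 'a) list \<Rightarrow> 'a list" where
  "juxt X a [] = []"
| "juxt X a ((c, x) # ps) =
     Mor X (a + c) (a + (juxt_width ps + c)) (sum_inj a a id ((+) (juxt_width ps))) x
     # map (Mor X (a + juxt_width ps) (a + (juxt_width ps + c)) id) (juxt X a ps)"

definition valid_reps :: "'a psh \<Rightarrow> nat \<Rightarrow> (nat \<times> 'a) list \<Rightarrow> bool" where
  "valid_reps X a ps \<longleftrightarrow> (\<forall>(c, x) \<in> set ps. x \<in> Ob X (a + c))"

lemma valid_reps_simps [simp]:
  "valid_reps X a []"
  "valid_reps X a ((c, x) # ps) \<longleftrightarrow> x \<in> Ob X (a + c) \<and> valid_reps X a ps"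
  by (auto simp: valid_reps_def)

lemma valid_reps_replicate [simp]: "valid_reps X a (replicate n (c, x)) \<longleftrightarrow> n = 0 \<or> x \<in> Ob X (a + c)"
  by (auto simp: valid_reps_def)

lemma juxt_width_replicate [simp]: "juxt_width (replicate n (c, x)) = n * c"
  by (induction n) auto

lemma juxt_width_map_snd [simp]: "juxt_width (map (\<lambda>(c, x). (c, h c x)) ps) = juxt_width ps"
  by (induction ps) auto

lemma is_inj_sum_inj_shift: "is_inj (a + c) (a + (k + c)) (sum_inj a a id ((+) k))"
  by (simp add: is_inj_add_left)

lemma juxt_in_powps:
  assumes X: "presheaf X"
  shows "valid_reps X a ps \<Longrightarrow> juxt X a ps \<in> Ob (powps X (length ps)) (a + juxt_width ps)"
proof (induction ps)
  case (Cons p ps)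
  obtain c x where p: "p = (c, x)" by (cases p)
  with Cons show ?case
    using presheaf_Mor_closed[OF X is_inj_sum_inj_shift, of x a c "juxt_width ps"]
      presheaf_Mor_closed[OF X is_inj_id[of "a + juxt_width ps" "a + (juxt_width ps + c)"]]
    by auto
qed simp

lemma nat_trans_Cons:
  "nat_trans (prodps X (powps X k)) (powps X (Suc k)) (\<lambda>_ p. fst p # snd p)"
  by (auto simp: nat_trans_def)

lemma force_tensor_cls:
  assumes X: "presheaf X"
  shows "valid_reps X a ps
    \<Longrightarrow> force_tensor X a (map (cls X a) ps) = cls (powps X (length ps)) a (juxt_width ps, juxt X a ps)"
proof (induction ps)
  case Nil then show ?case by (simp add: etaT_def)
next
  case (Cons p ps)
  obtain c x where p: "p = (c, x)" by (cases p)
  with Cons show ?case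
    using juxt_in_powps[OF X, of a ps]
    by (simp add: nabla_cls[OF X presheaf_powps[OF X]] Tnt_cls[OF nat_trans_Cons])
qed

lemma Mor_sum_inj_shift_commute:
  assumes X: "presheaf X" and f: "is_inj a a' f" and x: "x \<in> Ob X (a + c)"
  shows "Mor X (a + (k + c)) (a' + (k + c)) (sum_inj a a' f id) (Mor X (a + c) (a + (k + c)) (sum_inj a a id ((+) k)) x)
    = Mor X (a' + c) (a' + (k + c)) (sum_inj a' a' id ((+) k)) (Mor X (a + c) (a' + c) (sum_inj a a' f id) x)"
proof -
  have "Mor X (a + (k + c)) (a' + (k + c)) (sum_inj a a' f id) (Mor X (a + c) (a + (k + c)) (sum_inj a a id ((+) k)) x)
      = Mor X (a + c) (a' + (k + c)) (sum_inj a a' f ((+) k)) x"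
    by (rule presheaf_Mor_comp[OF X is_inj_sum_inj_shift is_inj_sum_inj_right_id[OF f] x]) (auto simp: sum_inj_def)
  also have "\<dots> = Mor X (a' + c) (a' + (k + c)) (sum_inj a' a' id ((+) k)) (Mor X (a + c) (a' + c) (sum_inj a a' f id) x)"
    by (rule presheaf_Mor_comp[OF X is_inj_sum_inj_right_id[OF f] is_inj_sum_inj_shift x, symmetric])
      (auto simp: sum_inj_def is_inj_less[OF f])
  finally show ?thesis .
qed

lemma Mor_id_sum_inj_commute:
  assumes X: "presheaf X" and f: "is_inj a a' f" and y: "y \<in> Ob X (a + k)"
  shows "Mor X (a + (k + c)) (a' + (k + c)) (sum_inj a a' f id) (Mor X (a + k) (a + (k + c)) id y)
    = Mor X (a' + k) (a' + (k + c)) id (Mor X (a + k) (a' + k) (sum_inj a a' f id) y)"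
proof -
  have "Mor X (a + (k + c)) (a' + (k + c)) (sum_inj a a' f id) (Mor X (a + k) (a + (k + c)) id y)
      = Mor X (a + k) (a' + (k + c)) (sum_inj a a' f id) y"
    by (rule presheaf_Mor_comp[OF X _ is_inj_sum_inj_right_id[OF f] y]) (simp_all add: is_inj_id)
  also have "\<dots> = Mor X (a' + k) (a' + (k + c)) id (Mor X (a + k) (a' + k) (sum_inj a a' f id) y)"
    by (rule presheaf_Mor_comp[OF X is_inj_sum_inj_right_id[OF f] _ y, symmetric]) (simp_all add: is_inj_id)
  finally show ?thesis .
qed

lemma juxt_natural:
  assumes X: "presheaf X" and f: "is_inj a a' f"
  shows "valid_reps X a ps \<Longrightarrow> map (Mor X (a + juxt_width ps) (a' + juxt_width ps) (sum_inj a a' f id)) (juxt X a ps)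
     = juxt X a' (map (\<lambda>(c, x). (c, Mor X (a + c) (a' + c) (sum_inj a a' f id) x)) ps)"
proof (induction ps)
  case (Cons p ps)
  obtain c x where p: "p = (c, x)" by (cases p)
  with Cons have x: "x \<in> Ob X (a + c)" and ps: "valid_reps X a ps" by auto
  define k where "k = juxt_width ps"
  define \<phi> where "\<phi> = (\<lambda>(c, x). (c, Mor X (a + c) (a' + c) (sum_inj a a' f id) x))"
  have "set (juxt X a ps) \<subseteq> Ob X (a + k)"
    using juxt_in_powps[OF X ps] by (simp add: k_def)
  then have "map (Mor X (a + (k + c)) (a' + (k + c)) (sum_inj a a' f id)) (map (Mor X (a + k) (a + (k + c)) id) (juxt X a ps))
      = map (Mor X (a' + k) (a' + (k + c)) id) (map (Mor X (a + k) (a' + k) (sum_inj a a' f id)) (juxt X a ps))"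
    using Mor_id_sum_inj_commute[OF X f] by (auto intro!: map_cong)
  also have "map (Mor X (a + k) (a' + k) (sum_inj a a' f id)) (juxt X a ps) = juxt X a' (map \<phi> ps)"
    using Cons.IH[OF ps] by (simp add: k_def \<phi>_def id_def)
  finally show ?case
    using Mor_sum_inj_shift_commute[OF X f x, of k] by (simp add: p k_def[symmetric] \<phi>_def id_def)
qed simp

lemma TOb_list_E:
  assumes "set Cs \<subseteq> TOb X a"
  obtains ps where "Cs = map (cls X a) ps" "valid_reps X a ps"
proof -
  from assms have "\<exists>ps. Cs = map (cls X a) ps \<and> valid_reps X a ps"
  proof (induction Cs)
    case (Cons C Cs)
    then obtain ps where "Cs = map (cls X a) ps" "valid_reps X a ps" by auto
    moreover from Cons.prems obtain b x where "C = cls X a (b, x)" "x \<in> Ob X (a + b)"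
      by (auto elim: TOb_E)
    ultimately show ?case by (intro exI[of _ "(b, x) # ps"]) simp
  qed simp
  then show ?thesis using that by blast
qed

lemma nat_trans_force_tensor:
  assumes X: "presheaf X"
  shows "nat_trans (powps (Tps X) n) (Tps (powps X n)) (force_tensor X)"
  unfolding nat_trans_def
proof (intro conjI allI impI)
  fix m Cs assume "Cs \<in> Ob (powps (Tps X) n) m"
  then obtain ps where Cs: "Cs = map (cls X m) ps" and ps: "valid_reps X m ps" and n: "length ps = n"
    by (auto elim: TOb_list_E)
  show "force_tensor X m Cs \<in> Ob (Tps (powps X n)) m"
    using juxt_in_powps[OF X ps] by (simp add: Cs n force_tensor_cls[OF X ps])
next
  fix m m' f Cs assume "is_inj m m' f \<and> Cs \<in> Ob (powps (Tps X) n) m"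
  then obtain ps where f: "is_inj m m' f" and Cs: "Cs = map (cls X m) ps" and ps: "valid_reps X m ps"
    and n: "length ps = n"
    by (auto elim: TOb_list_E)
  define ps' where "ps' = map (\<lambda>(c, x). (c, Mor X (m + c) (m' + c) (sum_inj m m' f id) x)) ps"
  have ps': "valid_reps X m' ps'"
    using ps presheaf_Mor_closed[OF X is_inj_sum_inj_right_id[OF f]] by (auto simp: valid_reps_def ps'_def)
  have "Mor (powps (Tps X) n) m m' f Cs = map (cls X m') ps'"
    by (auto simp: Cs ps'_def TMor_cls[OF X f])
  then have "force_tensor X m' (Mor (powps (Tps X) n) m m' f Cs) = cls (powps X n) m' (juxt_width ps, juxt X m' ps')"
    using force_tensor_cls[OF X ps'] n by (simp add: ps'_def)
  also have "\<dots> = TMor (powps X n) m m' f (cls (powps X n) m (juxt_width ps, juxt X m ps))"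
    using juxt_natural[OF X f ps] by (simp add: ps'_def TMor_cls[OF presheaf_powps[OF X] f])
  finally show "force_tensor X m' (Mor (powps (Tps X) n) m m' f Cs) = Mor (Tps (powps X n)) m m' f (force_tensor X m Cs)"
    using force_tensor_cls[OF X ps] n by (simp add: Cs)
qed

lemma samp_sharp_cls:
  assumes X: "presheaf X" and x: "x \<in> Ob X (a + c)"
  shows "samp_sharp X n a (cls X a (c, x)) = cls (powps X n) a (n * c, juxt X a (replicate n (c, x)))"
  using force_tensor_cls[OF X, of a "replicate n (c, x)"] x
  by (simp add: samp_sharp_def kcomp_def copy_sharp_def etaT_def Tnt_cls[OF nat_trans_force_tensor[OF X]]
      muT_cls[OF presheaf_powps[OF X], of n a 0, simplified])

lemma nat_trans_samp_sharp:
  assumes X: "presheaf X"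
  shows "nat_trans (Tps X) (Tps (powps X n)) (samp_sharp X n)"
  unfolding nat_trans_def
proof (intro conjI allI impI)
  fix a C assume "C \<in> Ob (Tps X) a"
  then obtain c x where "C = cls X a (c, x)" "x \<in> Ob X (a + c)" by (auto elim: TOb_E)
  then show "samp_sharp X n a C \<in> Ob (Tps (powps X n)) a"
    using juxt_in_powps[OF X, of a "replicate n (c, x)"] by (simp add: samp_sharp_cls[OF X])
next
  fix a a' f C assume "is_inj a a' f \<and> C \<in> Ob (Tps X) a"
  then obtain c x where f: "is_inj a a' f" and C: "C = cls X a (c, x)" and x: "x \<in> Ob X (a + c)"
    by (auto elim: TOb_E)
  show "samp_sharp X n a' (Mor (Tps X) a a' f C) = Mor (Tps (powps X n)) a a' f (samp_sharp X n a C)"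
    using juxt_natural[OF X f, of "replicate n (c, x)"] x
    by (simp add: C TMor_cls[OF X f] TMor_cls[OF presheaf_powps[OF X] f] samp_sharp_cls[OF X]
        presheaf_Mor_closed[OF X is_inj_sum_inj_right_id[OF f]])
qed

lemma kcomp_samp_sharp_cls:
  assumes X: "presheaf X" and x: "x \<in> Ob X (a + b + c)"
  shows "muT (powps X n) a (Tnt (Tps (powps X n)) (samp_sharp X n) a (cls (Tps X) a (b, cls X (a + b) (c, x))))
     = cls (powps X n) a (b + n * c, juxt X (a + b) (replicate n (c, x)))"
  by (simp add: Tnt_cls[OF nat_trans_samp_sharp[OF X]] samp_sharp_cls[OF X x] muT_cls[OF presheaf_powps[OF X]])

section \<open>Equality in the colimit\<close>

text \<open>Since Inj has the amalgamation property, joinability survives colimit steps in both directions,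
so representatives of the same class are joinable.\<close>

definition joinable :: "'a psh \<Rightarrow> nat \<Rightarrow> nat \<times> 'a \<Rightarrow> nat \<times> 'a \<Rightarrow> bool" where
  "joinable Y a p q \<longleftrightarrow> (\<exists>d h h'. is_inj (fst p) d h \<and> is_inj (fst q) d h' \<and>
     Mor Y (a + fst p) (a + d) (sum_inj a a id h) (snd p) = Mor Y (a + fst q) (a + d) (sum_inj a a id h') (snd q))"

lemma joinable_refl: "joinable Y a p p"
  unfolding joinable_def by (metis is_inj_id_refl)

lemma joinable_colim_step:
  assumes Y: "presheaf Y" and pq: "joinable Y a p q" and qr: "colim_step Y a q r"
    and x: "snd p \<in> Ob Y (a + fst p)"
  shows "joinable Y a p r"
proof -
  obtain d h h' where h: "is_inj (fst p) d h" and h': "is_inj (fst q) d h'"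
    and eq: "Mor Y (a + fst p) (a + d) (sum_inj a a id h) (snd p) = Mor Y (a + fst q) (a + d) (sum_inj a a id h') (snd q)"
    using pq by (auto simp: joinable_def)
  obtain b1 b2 g y where q: "q = (b1, y)" and y: "y \<in> Ob Y (a + b1)" and g: "is_inj b1 b2 g"
    and r: "r = (b2, Mor Y (a + b1) (a + b2) (sum_inj a a id g) y)"
    using qr by (auto simp: colim_step_def)
  obtain D p1 p2 where p1: "is_inj d D p1" and p2: "is_inj b2 D p2" and p12: "\<And>i. i < b1 \<Longrightarrow> p1 (h' i) = p2 (g i)"
    using is_inj_amalgamation[OF h'[unfolded q fst_conv] g] by blast
  have "Mor Y (a + fst p) (a + D) (sum_inj a a id (p1 \<circ> h)) (snd p)
      = Mor Y (a + d) (a + D) (sum_inj a a id p1) (Mor Y (a + fst p) (a + d) (sum_inj a a id h) (snd p))"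
    by (rule presheaf_Mor_comp[OF Y is_inj_sum_inj_id[OF h] is_inj_sum_inj_id[OF p1] x, symmetric])
      (simp add: sum_inj_id_comp)
  also have "\<dots> = Mor Y (a + d) (a + D) (sum_inj a a id p1) (Mor Y (a + b1) (a + d) (sum_inj a a id h') y)"
    by (simp add: eq q)
  also have "\<dots> = Mor Y (a + b1) (a + D) (sum_inj a a id (p2 \<circ> g)) y"
    using h' by (intro presheaf_Mor_comp[OF Y is_inj_sum_inj_id is_inj_sum_inj_id[OF p1] y]) (simp_all add: q sum_inj_def p12)
  also have "\<dots> = Mor Y (a + b2) (a + D) (sum_inj a a id p2) (Mor Y (a + b1) (a + b2) (sum_inj a a id g) y)"
    by (rule presheaf_Mor_comp[OF Y is_inj_sum_inj_id[OF g] is_inj_sum_inj_id[OF p2] y, symmetric])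
      (simp add: sum_inj_id_comp)
  finally show ?thesis
    unfolding joinable_def r fst_conv snd_conv using is_inj_comp[OF h p1] p2 by blast
qed

lemma joinable_colim_step_converse:
  assumes Y: "presheaf Y" and pq: "joinable Y a p q" and rq: "colim_step Y a r q"
  shows "joinable Y a p r"
proof -
  obtain d h h' where h: "is_inj (fst p) d h" and h': "is_inj (fst q) d h'"
    and eq: "Mor Y (a + fst p) (a + d) (sum_inj a a id h) (snd p) = Mor Y (a + fst q) (a + d) (sum_inj a a id h') (snd q)"
    using pq by (auto simp: joinable_def)
  obtain b0 b1 g y where r: "r = (b0, y)" and y: "y \<in> Ob Y (a + b0)" and g: "is_inj b0 b1 g"
    and q: "q = (b1, Mor Y (a + b0) (a + b1) (sum_inj a a id g) y)"
    using rq by (auto simp: colim_step_def)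
  have h1: "is_inj b1 d h'" using h' q by simp
  have "Mor Y (a + fst p) (a + d) (sum_inj a a id h) (snd p) = Mor Y (a + b0) (a + d) (sum_inj a a id (h' \<circ> g)) y"
    by (simp add: eq q presheaf_Mor_comp[OF Y is_inj_sum_inj_id[OF g] is_inj_sum_inj_id[OF h1] y] sum_inj_id_comp)
  then show ?thesis
    unfolding joinable_def r fst_conv snd_conv using h is_inj_comp[OF g h1] by blast
qed

lemma colim_eq_imp_joinable:
  assumes Y: "presheaf Y" and pq: "colim_eq Y a p q" and x: "snd p \<in> Ob Y (a + fst p)"
  shows "joinable Y a p q"
  using pq unfolding colim_eq_def
proof (induction rule: rtranclp_induct)
  case (step q r)
  then show ?case
    using joinable_colim_step[OF Y _ _ x] joinable_colim_step_converse[OF Y] by blast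
qed (rule joinable_refl)

section \<open>Separating blocks of fresh names\<close>

lemma block_end_le: "r < n \<Longrightarrow> r * c + c \<le> n * (c::nat)"
  using mult_le_mono1[of "Suc r" n c] by simp

lemma is_inj_block:
  assumes h: "is_inj (b + n * c) d h" and r: "r < n"
  shows "is_inj (b + c) d (h \<circ> sum_inj b b id ((+) (r * c)))"
  using is_inj_comp[OF is_inj_sum_inj_id[OF is_inj_add_left[OF block_end_le[OF r]]] h] .

lemma card_blocks_meeting_le:
  assumes h: "is_inj (b + n * c) d h" and S: "finite S"
  shows "card {r. r < n \<and> (\<exists>j<c. h (b + r * c + j) \<in> S)} \<le> card S"
proof -
  define block where "block s = (the_inv_into {..<b + n * c} h s - b) div c" for s
  have inj: "inj_on h {..<b + n * c}" using h by (simp add: is_inj_def)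
  have "{r. r < n \<and> (\<exists>j<c. h (b + r * c + j) \<in> S)} \<subseteq> block ` S"
  proof safe
    fix r j assume r: "r < n" and j: "j < c" and hS: "h (b + r * c + j) \<in> S"
    have "b + r * c + j < b + n * c" using block_end_le[OF r, of c] j by linarith
    then have "block (h (b + r * c + j)) = r"
      using j by (simp add: block_def the_inv_into_f_f[OF inj])
    with hS show "r \<in> block ` S" by (metis image_eqI)
  qed
  then show ?thesis
    using card_image_le[OF S, of block] card_mono[OF finite_imageI[OF S]] by (meson le_trans)
qed

text \<open>Each outer name of one side meets at most one block of fresh names of the other side.\<close>

lemma exists_separating_block:
  assumes h: "is_inj (b + n * c) d h" and h': "is_inj (b' + n * c') d h'" and n: "b + b' < n"
  obtains r where "r < n" "\<And>j. j < c \<Longrightarrow> h (b + r * c + j) \<notin> h' ` {..<b'}"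
    "\<And>j. j < c' \<Longrightarrow> h' (b' + r * c' + j) \<notin> h ` {..<b}"
proof -
  let ?B = "{r. r < n \<and> (\<exists>j<c. h (b + r * c + j) \<in> h' ` {..<b'})}"
  let ?B' = "{r. r < n \<and> (\<exists>j<c'. h' (b' + r * c' + j) \<in> h ` {..<b})}"
  have "card (?B \<union> ?B') \<le> b' + b"
    using card_blocks_meeting_le[OF h, of "h' ` {..<b'}"] card_blocks_meeting_le[OF h', of "h ` {..<b}"]
      card_image_le[of "{..<b'}" h'] card_image_le[of "{..<b}" h] card_Un_le[of ?B ?B']
    by simp
  then have "\<not> {..<n} \<subseteq> ?B \<union> ?B'"
    using card_mono[of "?B \<union> ?B'" "{..<n}"] n by fastforce
  then show ?thesis using that by blast
qed

lemma juxt_replicate_nth: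
  assumes X: "presheaf X" and x: "x \<in> Ob X (a + c)"
  shows "i < n \<Longrightarrow> juxt X a (replicate n (c, x)) ! i = Mor X (a + c) (a + n * c) (sum_inj a a id ((+) ((n - Suc i) * c))) x"
proof (induction n arbitrary: i)
  case (Suc n)
  show ?case
  proof (cases i)
    case 0
    show ?thesis
      by (simp add: 0 add.commute[of c] id_def)
  next
    case (Suc i')
    with Suc.prems have i': "i' < n" by simp
    have "length (juxt X a (replicate n (c, x))) = n"
      using juxt_in_powps[OF X, of a "replicate n (c, x)"] x by simp
    then have "juxt X a (replicate (Suc n) (c, x)) ! i
        = Mor X (a + n * c) (a + (n * c + c)) id (Mor X (a + c) (a + n * c) (sum_inj a a id ((+) ((n - Suc i') * c))) x)"
      using Suc.IH[OF i'] i' by (simp add: Suc id_def)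
    also have "\<dots> = Mor X (a + c) (a + (n * c + c)) (sum_inj a a id ((+) ((n - Suc i') * c))) x"
    proof (rule presheaf_Mor_comp[OF X _ _ x])
      show "is_inj (a + c) (a + n * c) (sum_inj a a id ((+) ((n - Suc i') * c)))"
        using block_end_le[of "n - Suc i'" n c] i' by (simp add: is_inj_add_left)
    qed (simp_all add: is_inj_id)
    finally show ?thesis by (simp add: Suc add.commute[of c] id_def)
  qed
qed simp

lemma juxt_replicate_block:
  assumes X: "presheaf X" and x: "x \<in> Ob X (a + b + c)" and h: "is_inj (b + n * c) d h" and r: "r < n"
  shows "map (Mor X (a + (b + n * c)) (a + d) (sum_inj a a id h)) (juxt X (a + b) (replicate n (c, x))) ! (n - Suc r)
    = Mor X (a + b + c) (a + d) (sum_inj a a id (h \<circ> sum_inj b b id ((+) (r * c)))) x"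
proof -
  have "length (juxt X (a + b) (replicate n (c, x))) = n"
    using juxt_in_powps[OF X, of "a + b" "replicate n (c, x)"] x by simp
  moreover have "juxt X (a + b) (replicate n (c, x)) ! (n - Suc r)
      = Mor X (a + b + c) (a + b + n * c) (sum_inj (a + b) (a + b) id ((+) (r * c))) x"
    using juxt_replicate_nth[OF X x, of "n - Suc r" n] r by (simp add: Suc_diff_Suc)
  moreover have "Mor X (a + b + n * c) (a + d) (sum_inj a a id h)
      (Mor X (a + b + c) (a + b + n * c) (sum_inj (a + b) (a + b) id ((+) (r * c))) x)
      = Mor X (a + b + c) (a + d) (sum_inj a a id (h \<circ> sum_inj b b id ((+) (r * c)))) x"
  proof (rule presheaf_Mor_comp[OF X _ _ x])
    show "is_inj (a + b + c) (a + b + n * c) (sum_inj (a + b) (a + b) id ((+) (r * c)))"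
      using block_end_le[OF r, of c] by (simp add: is_inj_add_left)
    show "is_inj (a + b + n * c) (a + d) (sum_inj a a id h)"
      using is_inj_sum_inj_id[OF h, of a] by (simp add: add.assoc)
  qed (auto simp: sum_inj_def)
  ultimately show ?thesis using r by (simp add: add.assoc)
qed

lemma separated_block_of_equal_samples:
  assumes X: "presheaf X" and x: "x \<in> Ob X (a + b + c)" and x': "x' \<in> Ob X (a + b' + c')"
    and n: "b + b' < n"
    and eq: "cls (powps X n) a (b + n * c, juxt X (a + b) (replicate n (c, x)))
      = cls (powps X n) a (b' + n * c', juxt X (a + b') (replicate n (c', x')))"
  obtains d u u' where "is_inj (b + c) d u" "is_inj (b' + c') d u'"
    "\<And>j. j < c \<Longrightarrow> u (b + j) \<notin> u' ` {..<b'}" "\<And>j. j < c' \<Longrightarrow> u' (b' + j) \<notin> u ` {..<b}"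
    "Mor X (a + b + c) (a + d) (sum_inj a a id u) x = Mor X (a + b' + c') (a + d) (sum_inj a a id u') x'"
proof -
  have "joinable (powps X n) a (b + n * c, juxt X (a + b) (replicate n (c, x))) (b' + n * c', juxt X (a + b') (replicate n (c', x')))"
    using eq juxt_in_powps[OF X, of "a + b" "replicate n (c, x)"] x
    by (intro colim_eq_imp_joinable[OF presheaf_powps[OF X]]) (simp_all add: cls_eq_iff add.assoc)
  then obtain d h h' where h: "is_inj (b + n * c) d h" and h': "is_inj (b' + n * c') d h'"
    and samples: "map (Mor X (a + (b + n * c)) (a + d) (sum_inj a a id h)) (juxt X (a + b) (replicate n (c, x)))
      = map (Mor X (a + (b' + n * c')) (a + d) (sum_inj a a id h')) (juxt X (a + b') (replicate n (c', x')))"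
    by (auto simp: joinable_def)
  obtain r where r: "r < n" and sep: "\<And>j. j < c \<Longrightarrow> h (b + r * c + j) \<notin> h' ` {..<b'}"
    and sep': "\<And>j. j < c' \<Longrightarrow> h' (b' + r * c' + j) \<notin> h ` {..<b}"
    using exists_separating_block[OF h h' n] by blast
  define u where "u = h \<circ> sum_inj b b id ((+) (r * c))"
  define u' where "u' = h' \<circ> sum_inj b' b' id ((+) (r * c'))"
  have restrict: "u j = h j" if "j < b" for j
    using that by (simp add: u_def sum_inj_def)
  have restrict': "u' j = h' j" if "j < b'" for j
    using that by (simp add: u'_def sum_inj_def)
  have shift: "u (b + j) = h (b + r * c + j)" "u' (b' + j) = h' (b' + r * c' + j)" for j
    by (simp_all add: u_def u'_def sum_inj_def add.assoc)
  show ?thesis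
  proof (rule that)
    show "is_inj (b + c) d u" "is_inj (b' + c') d u'"
      using is_inj_block[OF h r] is_inj_block[OF h' r] by (simp_all add: u_def u'_def)
    show "u (b + j) \<notin> u' ` {..<b'}" if "j < c" for j
      using sep[OF that] by (auto simp: shift restrict')
    show "u' (b' + j) \<notin> u ` {..<b}" if "j < c'" for j
      using sep'[OF that] by (auto simp: shift restrict)
    show "Mor X (a + b + c) (a + d) (sum_inj a a id u) x = Mor X (a + b' + c') (a + d) (sum_inj a a id u') x'"
      using juxt_replicate_block[OF X x h r] juxt_replicate_block[OF X x' h' r] samples by (simp add: u_def u'_def)
  qed
qed

section \<open>A normal form for T(TX)\<close>

text \<open>The names of d outside S are moved from the outer to the inner layer.\<close>

definition move_inner :: "nat \<Rightarrow> nat \<Rightarrow> nat set \<Rightarrow> nat \<Rightarrow> nat" where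
  "move_inner a d S k = (if k < a \<or> k - a \<in> S then k else k + d)"

lemma is_inj_move_inner: "is_inj (a + d) (a + d + d) (move_inner a d S)"
  by (rule is_injI) (auto simp: move_inner_def split: if_splits)

lemma move_inner_sum_inj:
  assumes u: "is_inj (b + c) d u"
    and inS: "\<And>j. j < b \<Longrightarrow> u j \<in> S" and outS: "\<And>j. j < c \<Longrightarrow> u (b + j) \<notin> S"
    and i: "i < a + b + c"
  shows "sum_inj (a + d) (a + d) id (u \<circ> (+) b) (sum_inj (a + b) (a + d) (sum_inj a a id u) id i)
    = move_inner a d S (sum_inj a a id u i)"
proof -
  consider "i < a" | "a \<le> i" "i < a + b" | j where "i = a + b + j" "j < c"
    using i by (metis add_diff_inverse_nat add_less_cancel_left not_le)
  then show ?thesis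
  proof cases
    case 2
    then show ?thesis using inS[of "i - a"] is_inj_less[OF u, of "i - a"]
      by (simp add: sum_inj_def move_inner_def)
  next
    case (3 j)
    then show ?thesis using outS[of j] by (simp add: sum_inj_def move_inner_def)
  qed (simp add: sum_inj_def move_inner_def)
qed

lemma TT_cls_normal_form:
  assumes X: "presheaf X" and x: "x \<in> Ob X (a + b + c)" and u: "is_inj (b + c) d u"
    and inS: "\<And>j. j < b \<Longrightarrow> u j \<in> S" and outS: "\<And>j. j < c \<Longrightarrow> u (b + j) \<notin> S"
  shows "cls (Tps X) a (b, cls X (a + b) (c, x))
    = cls (Tps X) a (d, cls X (a + d) (d, Mor X (a + d) (a + d + d) (move_inner a d S) (Mor X (a + b + c) (a + d) (sum_inj a a id u) x)))"
proof -
  have ub: "is_inj b d u" using is_inj_mono[OF u] by simp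
  have uc: "is_inj c d (u \<circ> (+) b)" using is_inj_comp[OF is_inj_add_left u] by simp
  let ?U = "sum_inj (a + b) (a + d) (sum_inj a a id u) id"
  have U: "is_inj (a + b + c) (a + d + c) ?U" using is_inj_sum_inj_right_id[OF is_inj_sum_inj_id[OF ub]] .
  have "cls (Tps X) a (b, cls X (a + b) (c, x)) = cls (Tps X) a (d, cls X (a + d) (c, Mor X (a + b + c) (a + d + c) ?U x))"
    using cls_step[of "cls X (a + b) (c, x)" "Tps X" a b d u] x ub
    by (simp add: TMor_cls[OF X is_inj_sum_inj_id[OF ub]])
  also have "\<dots> = cls (Tps X) a (d, cls X (a + d) (d,
      Mor X (a + d + c) (a + d + d) (sum_inj (a + d) (a + d) id (u \<circ> (+) b)) (Mor X (a + b + c) (a + d + c) ?U x)))"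
    using cls_step[OF presheaf_Mor_closed[OF X U x] uc] by simp
  also have "Mor X (a + d + c) (a + d + d) (sum_inj (a + d) (a + d) id (u \<circ> (+) b)) (Mor X (a + b + c) (a + d + c) ?U x)
      = Mor X (a + d) (a + d + d) (move_inner a d S) (Mor X (a + b + c) (a + d) (sum_inj a a id u) x)"
  proof -
    have "Mor X (a + d + c) (a + d + d) (sum_inj (a + d) (a + d) id (u \<circ> (+) b)) (Mor X (a + b + c) (a + d + c) ?U x)
        = Mor X (a + b + c) (a + d + d) (move_inner a d S \<circ> sum_inj a a id u) x"
      using move_inner_sum_inj[OF u inS outS] by (intro presheaf_Mor_comp[OF X U is_inj_sum_inj_id[OF uc] x]) simp
    also have "\<dots> = Mor X (a + d) (a + d + d) (move_inner a d S) (Mor X (a + b + c) (a + d) (sum_inj a a id u) x)"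
      using is_inj_sum_inj_id[OF u, of a]
      by (intro presheaf_Mor_comp[OF X _ is_inj_move_inner x, symmetric]) (simp_all add: add.assoc)
    finally show ?thesis .
  qed
  finally show ?thesis .
qed

lemma eq_if_kcomp_samp_sharp_eq:
  assumes X: "presheaf X" and t: "t \<in> TOb (Tps X) a" and s: "s \<in> TOb (Tps X) a"
    and eq: "\<And>n. muT (powps X n) a (Tnt (Tps (powps X n)) (samp_sharp X n) a t)
      = muT (powps X n) a (Tnt (Tps (powps X n)) (samp_sharp X n) a s)"
  shows "t = s"
proof -
  obtain b c x where t: "t = cls (Tps X) a (b, cls X (a + b) (c, x))" and x: "x \<in> Ob X (a + b + c)"
    using t by (rule TTOb_E)
  obtain b' c' x' where s: "s = cls (Tps X) a (b', cls X (a + b') (c', x'))" and x': "x' \<in> Ob X (a + b' + c')"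
    using s by (rule TTOb_E)
  obtain d u u' where u: "is_inj (b + c) d u" and u': "is_inj (b' + c') d u'"
    and sep: "\<And>j. j < c \<Longrightarrow> u (b + j) \<notin> u' ` {..<b'}"
    and sep': "\<And>j. j < c' \<Longrightarrow> u' (b' + j) \<notin> u ` {..<b}"
    and same_block: "Mor X (a + b + c) (a + d) (sum_inj a a id u) x = Mor X (a + b' + c') (a + d) (sum_inj a a id u') x'"
    using separated_block_of_equal_samples[OF X x x', of "b + b' + 1"] eq[of "b + b' + 1"]
    by (auto simp: t s kcomp_samp_sharp_cls[OF X x] kcomp_samp_sharp_cls[OF X x'])
  define S where "S = u ` {..<b} \<union> u' ` {..<b'}"
  have "u (b + j) \<notin> S" if "j < c" for j
    using sep[OF that] is_inj_notin_image_prefix[OF u that] by (simp add: S_def)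
  then have "t = cls (Tps X) a (d, cls X (a + d) (d,
      Mor X (a + d) (a + d + d) (move_inner a d S) (Mor X (a + b + c) (a + d) (sum_inj a a id u) x)))"
    unfolding t by (intro TT_cls_normal_form[OF X x u]) (auto simp: S_def)
  moreover have "u' (b' + j) \<notin> S" if "j < c'" for j
    using sep'[OF that] is_inj_notin_image_prefix[OF u' that] by (auto simp: S_def)
  then have "s = cls (Tps X) a (d, cls X (a + d) (d,
      Mor X (a + d) (a + d + d) (move_inner a d S) (Mor X (a + b' + c') (a + d) (sum_inj a a id u') x')))"
    unfolding s by (intro TT_cls_normal_form[OF X x' u']) (auto simp: S_def)
  ultimately show ?thesis by (simp add: same_block)
qed

theorem theorem9p6:
  fixes X :: "'a psh" and A :: "'b psh"
  assumes "presheaf X" and "presheaf A"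
  shows "samp_jointly_monic_wrt X A"
  unfolding samp_jointly_monic_wrt_def nt_eq_def
proof (intro allI impI)
  fix f g a y
  assume fg: "nat_trans A (Tps (Tps X)) f \<and> nat_trans A (Tps (Tps X)) g \<and>
    (\<forall>n. \<forall>m y. y \<in> Ob A m \<longrightarrow>
       kcomp (powps X n) (samp_sharp X n) f m y = kcomp (powps X n) (samp_sharp X n) g m y)"
    and y: "y \<in> Ob A a"
  \<comment> \<open>The samp_n separate points of T(TX)(a) one at a time.\<close>
  show "f a y = g a y"
  proof (rule eq_if_kcomp_samp_sharp_eq[OF assms(1)])
    show "f a y \<in> TOb (Tps X) a" "g a y \<in> TOb (Tps X) a"
      using fg y by (simp_all add: nat_trans_def)
  qed (use fg y in \<open>simp add: kcomp_def\<close>)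
qed

end
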